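(* Let $X$, $Y$ be locally compact, $\sigma$-compact Polish spaces and let $k\geq 0$ be an integer. Let $\mu\in M_+(X)$ be a finite nonnegative Borel measure and $\nu\in P_k(Y)$. Suppose $L$ is a nonnegative continuous linear functional on $C_{b,k}(X\times Y)$ such that for all $u\in C_{b,k}(X)$ and $v\in C_{b,k}(Y)$, $$\langle L, u(x)+v(y)\rangle=\int_X u\,d\mu+\int_Y v\,d\nu .$$ Then $\mu\in P_k(X)$, and $L$ is (given by integration against) a probability measure in $P_k(X\times Y)$ which belongs to $\Pi(\mu,\nu)$.
   Context: For a Polish space $Z$, $\|z\|_Z$ denotes the distance from $z$ to a fixed reference point of $Z$; on $X\times Y$ one uses $\|x\|_X+\|y\|_Y$. For an integer $k\ge 0$, $C_{b,k}(Z)$ is the Banach space of continuous $u:Z\to\mathbb{R}$ with $\|u\|_{b,k}=\sup_{z}\frac{|u(z)|}{1+\|z\|_Z^k}<\infty$ (on $X\times Y$ the weight is $1+(\|x\|_X+\|y\|_Y)^k$). $P_k(Z)$ is the set of Borel probability measures $\eta$ on $Z$ with $\int\|z\|_Z^k\,d\eta<\infty$ ($P_0=P$). $\Pi(\mu,\nu)$ is the set of probability measures on $X\times Y$ with marginals $\mu$ and $\nu$. A functional $L$ is nonnegative if $\langle L,p\rangle\ge0$ whenever $p\ge0$. *)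

theory Defs
  imports "HOL-Analysis.Analysis" "HOL-Probability.Probability"
begin

definition loc_compact_type :: "'a::topological_space itself \<Rightarrow> bool" where
  "loc_compact_type _ \<longleftrightarrow> (\<forall>x::'a. \<exists>U K. open U \<and> compact K \<and> x \<in> U \<and> U \<subseteq> K)"

definition sigma_compact_type :: "'a::topological_space itself \<Rightarrow> bool" where
  "sigma_compact_type _ \<longleftrightarrow> (\<exists>K::nat \<Rightarrow> 'a set. (\<forall>n. compact (K n)) \<and> (\<Union>n. K n) = UNIV)"

text \<open>The space C_{b,k} w.r.t. a weight function w (w z = norm of z), and its norm.\<close>
definition Cbk :: "('z::topological_space \<Rightarrow> real) \<Rightarrow> nat \<Rightarrow> ('z \<Rightarrow> real) set" where
  "Cbk w k = {u. continuous_on UNIV u \<and> (\<exists>C. \<forall>z. \<bar>u z\<bar> \<le> C * (1 + w z ^ k))}"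

definition norm_bk :: "('z \<Rightarrow> real) \<Rightarrow> nat \<Rightarrow> ('z \<Rightarrow> real) \<Rightarrow> real" where
  "norm_bk w k u = (SUP z. \<bar>u z\<bar> / (1 + w z ^ k))"

definition nX :: "'a::metric_space \<Rightarrow> 'a \<Rightarrow> real" where "nX x0 x = dist x x0"

definition nXY :: "'a::metric_space \<Rightarrow> 'b::metric_space \<Rightarrow> 'a \<times> 'b \<Rightarrow> real" where
  "nXY x0 y0 z = dist (fst z) x0 + dist (snd z) y0"

definition Pk :: "('z::topological_space \<Rightarrow> real) \<Rightarrow> nat \<Rightarrow> 'z measure set" where
  "Pk w k = {\<eta>. sets \<eta> = sets borel \<and> prob_space \<eta> \<and>
              (\<integral>\<^sup>+ z. ennreal (w z ^ k) \<partial>\<eta>) < \<infinity>}"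

end

theory Submission
  imports Defs
begin

text \<open>
  Restricted to bounded continuous functions, \<open>L\<close> is positive, linear and normalised, and the
  marginal condition makes it \<sigma>-smooth in the sense of Daniell: if \<open>f\<^sub>n \<down> 0\<close>, Dini's
  theorem makes \<open>f\<^sub>n\<close> uniformly small on a compact rectangle \<open>K \<times> K'\<close>, and off the rectangle
  \<open>f\<^sub>n\<close> is dominated by \<open>B (q(x) + q'(y))\<close> with cutoffs \<open>q, q'\<close> of small \<open>\<mu>\<close>- and
  \<open>\<nu>\<close>-integral (tightness), on which \<open>L\<close> is known through the marginals. The Riesz construction
  (inner content of open sets, outer content, Caratheodory) then gives a Borel probability
  measure \<open>\<pi>\<close> representing \<open>L\<close> on bounded continuous functions, and its marginals are
  \<open>\<mu>\<close> and \<open>\<nu>\<close> because finite Borel measures on a metric space are determined by their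
  integrals of bounded continuous functions.

  Monotone truncation gives \<open>\<integral>(1 + |z|\<^sup>k) d\<pi> \<le> L(1 + |z|\<^sup>k)\<close>, and likewise a finite \<open>k\<close>-th moment of
  \<open>\<mu>\<close>. For \<open>f \<in> C\<^sub>b\<^sub>,\<^sub>k\<close> the clipped functions \<open>max (-n) (min n f)\<close> converge to \<open>f\<close> under \<open>\<pi>\<close>
  by dominated convergence and under \<open>L\<close> because \<open>|f - clip\<^sub>n f|\<close> is dominated by
  \<open>u\<^sub>n(x) + v\<^sub>n(y)\<close> whose marginal integrals tend to zero; hence \<open>L f = \<integral> f d\<pi>\<close>.
\<close>

section \<open>Bounded continuous functions\<close>

definition bcont :: "('z::topological_space \<Rightarrow> real) set" where
  "bcont = {f. continuous_on UNIV f \<and> (\<exists>B. \<forall>z. \<bar>f z\<bar> \<le> B)}"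

lemma bcontI: "continuous_on UNIV f \<Longrightarrow> (\<And>z. \<bar>f z\<bar> \<le> B) \<Longrightarrow> f \<in> bcont"
  unfolding bcont_def by blast

lemma bcontE:
  assumes "f \<in> bcont" obtains B where "continuous_on UNIV f" "\<And>z. \<bar>f z\<bar> \<le> B"
  using assms unfolding bcont_def by blast

lemma bcont_const [simp]: "(\<lambda>z. c) \<in> bcont"
  by (rule bcontI[where B="\<bar>c\<bar>"]) (auto intro: continuous_intros)

lemma bcont_lin:
  assumes "f \<in> bcont" "g \<in> bcont" shows "(\<lambda>z. a * f z + b * g z) \<in> bcont"
proof -
  obtain B C where B: "continuous_on UNIV f" "\<And>z. \<bar>f z\<bar> \<le> B"
    and C: "continuous_on UNIV g" "\<And>z. \<bar>g z\<bar> \<le> C"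
    using assms by (meson bcontE)
  show ?thesis
  proof (rule bcontI[where B="\<bar>a\<bar> * B + \<bar>b\<bar> * C"])
    show "continuous_on UNIV (\<lambda>z. a * f z + b * g z)" using B C by (auto intro!: continuous_intros)
    fix z
    have "\<bar>a * f z + b * g z\<bar> \<le> \<bar>a\<bar> * \<bar>f z\<bar> + \<bar>b\<bar> * \<bar>g z\<bar>"
      by (simp add: abs_mult abs_triangle_ineq[THEN order_trans])
    also have "\<dots> \<le> \<bar>a\<bar> * B + \<bar>b\<bar> * C"
      using B(2)[of z] C(2)[of z] by (intro add_mono mult_left_mono) auto
    finally show "\<bar>a * f z + b * g z\<bar> \<le> \<bar>a\<bar> * B + \<bar>b\<bar> * C" .
  qed
qed

lemma bcont_add: "f \<in> bcont \<Longrightarrow> g \<in> bcont \<Longrightarrow> (\<lambda>z. f z + g z) \<in> bcont"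
  using bcont_lin[of f g 1 1] by simp

lemma bcont_diff: "f \<in> bcont \<Longrightarrow> g \<in> bcont \<Longrightarrow> (\<lambda>z. f z - g z) \<in> bcont"
  using bcont_lin[of f g 1 "-1"] by simp

lemma bcont_scale: "f \<in> bcont \<Longrightarrow> (\<lambda>z. a * f z) \<in> bcont"
  using bcont_lin[of f f a 0] by simp

lemma bcont_sum:
  "finite A \<Longrightarrow> (\<And>i. i \<in> A \<Longrightarrow> f i \<in> bcont) \<Longrightarrow> (\<lambda>z. \<Sum>i\<in>A. f i z) \<in> bcont"
  by (induction A rule: finite_induct) (auto intro: bcont_add)

lemma bcont_min:
  assumes "f \<in> bcont" "g \<in> bcont" shows "(\<lambda>z. min (f z) (g z)) \<in> bcont"
proof -
  obtain B C where B: "continuous_on UNIV f" "\<And>z. \<bar>f z\<bar> \<le> B"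
    and C: "continuous_on UNIV g" "\<And>z. \<bar>g z\<bar> \<le> C"
    using assms by (meson bcontE)
  show ?thesis
  proof (rule bcontI[where B="B + C"])
    show "continuous_on UNIV (\<lambda>z. min (f z) (g z))" using B(1) C(1) by (intro continuous_on_min)
    fix z show "\<bar>min (f z) (g z)\<bar> \<le> B + C"
      using B(2)[of z] C(2)[of z] by (auto simp: abs_le_iff min_def)
  qed
qed

lemma bcont_max:
  assumes "f \<in> bcont" "g \<in> bcont" shows "(\<lambda>z. max (f z) (g z)) \<in> bcont"
proof -
  have "(\<lambda>z. max (f z) (g z)) = (\<lambda>z. - min (- f z) (- g z))" by (auto simp: fun_eq_iff)
  then show ?thesis
    using bcont_scale[OF bcont_min[OF bcont_scale[OF assms(1)] bcont_scale[OF assms(2)]], of "-1" "-1" "-1"]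
    by simp
qed

lemma bcont_compose:
  "f \<in> bcont \<Longrightarrow> continuous_on UNIV h \<Longrightarrow> (\<lambda>z. f (h z)) \<in> bcont"
  unfolding bcont_def by (auto intro: continuous_on_compose2[of UNIV f UNIV h])

lemma bcont_measurable: "f \<in> bcont \<Longrightarrow> f \<in> borel_measurable borel"
  by (auto elim!: bcontE intro: borel_measurable_continuous_onI)

lemma bcont_integrable:
  assumes "f \<in> bcont" "finite_measure M" "sets M = sets borel"
  shows "integrable M f"
proof -
  interpret finite_measure M by fact
  obtain B where "\<And>z. \<bar>f z\<bar> \<le> B" using assms(1) bcontE by metis
  then show ?thesis
    using assms(1) by (intro integrable_const_bound[where B=B])
      (auto simp: measurable_cong_sets[OF assms(3) refl] bcont_measurable)
qed

lemma bcont_positive_on_open: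
  fixes U :: "'z::metric_space set"
  assumes "open U"
  obtains h where "h \<in> bcont" "\<And>z. 0 \<le> h z" "\<And>z. 0 < h z \<longleftrightarrow> z \<in> U"
proof
  define h where "h z = (if U = UNIV then 1 else min 1 (infdist z (- U)))" for z
  have h0: "0 \<le> h z" and h1: "h z \<le> 1" for z by (auto simp: h_def infdist_nonneg)
  show "0 \<le> h z" for z by (rule h0)
  show "0 < h z \<longleftrightarrow> z \<in> U" for z
    using assms by (cases "z \<in> U") (auto simp: h_def intro!: infdist_pos_not_in_closed)
  show "h \<in> bcont"
  proof (rule bcontI[where B=1])
    show "continuous_on UNIV h"
      by (cases "U = UNIV") (auto simp: h_def[abs_def] intro!: continuous_intros)
    fix z show "\<bar>h z\<bar> \<le> 1" using h0[of z] h1[of z] by simp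
  qed
qed

lemma min_sum_le:
  fixes a :: real
  assumes "finite A" "0 \<le> a" "\<And>i. i \<in> A \<Longrightarrow> 0 \<le> b i"
  shows "min a (\<Sum>i\<in>A. b i) \<le> (\<Sum>i\<in>A. min a (b i))"
  using assms
proof (induction A rule: finite_induct)
  case (insert x F)
  have "0 \<le> sum b F" using insert by (auto intro: sum_nonneg)
  then have "min a (b x + sum b F) \<le> min a (b x) + min a (sum b F)"
    using insert.prems(1) insert.prems(2)[of x] by (simp add: min_def)
  also have "\<dots> \<le> min a (b x) + (\<Sum>i\<in>F. min a (b i))" using insert by auto
  finally show ?case using insert by simp
qed simp

lemma tendsto_min_scaled_sum:
  fixes t :: real
  assumes h: "\<And>i. 0 \<le> h i" and t: "0 \<le> t" "0 < t \<Longrightarrow> \<exists>j. 0 < h j"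
  shows "(\<lambda>N. min t (real N * (\<Sum>i<N. h i))) \<longlonglongrightarrow> t"
proof (cases "t = 0")
  case True
  then show ?thesis using h by (simp add: min_def sum_nonneg)
next
  case False
  then obtain j where j: "0 < h j" using t by force
  show ?thesis
  proof (rule tendsto_eventually, rule eventually_sequentiallyI)
    fix N assume N: "max (Suc j) (nat \<lceil>t / h j\<rceil>) \<le> N"
    then have "t \<le> real N * h j" using j by (simp add: divide_le_eq)
    also have "\<dots> \<le> real N * (\<Sum>i<N. h i)"
      using N h by (intro mult_left_mono member_le_sum) auto
    finally show "min t (real N * (\<Sum>i<N. h i)) = t" by simp
  qed
qed

lemma sum_clamped_layers:
  fixes s :: real
  shows "(\<Sum>i<n. min 1 (max 0 (s - real i))) = min (real n) (max 0 s)"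
  by (induction n) auto

section \<open>Daniell functionals are integrals\<close>

locale daniell_functional =
  fixes I :: "('z::metric_space \<Rightarrow> real) \<Rightarrow> real"
  assumes lin: "\<And>f g a b. f \<in> bcont \<Longrightarrow> g \<in> bcont \<Longrightarrow> I (\<lambda>z. a * f z + b * g z) = a * I f + b * I g"
    and pos: "\<And>f. f \<in> bcont \<Longrightarrow> (\<forall>z. 0 \<le> f z) \<Longrightarrow> 0 \<le> I f"
    and one: "I (\<lambda>z. 1) = 1"
    and daniell: "\<And>f. (\<forall>n. f n \<in> bcont) \<Longrightarrow> (\<forall>n z. 0 \<le> f n z) \<Longrightarrow> (\<forall>n z. f (Suc n) z \<le> f n z)
               \<Longrightarrow> (\<forall>z. (\<lambda>n. f n z) \<longlonglongrightarrow> 0) \<Longrightarrow> (\<lambda>n. I (f n)) \<longlonglongrightarrow> 0"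
begin

lemma I_add: "f \<in> bcont \<Longrightarrow> g \<in> bcont \<Longrightarrow> I (\<lambda>z. f z + g z) = I f + I g"
  using lin[of f g 1 1] by simp

lemma I_diff: "f \<in> bcont \<Longrightarrow> g \<in> bcont \<Longrightarrow> I (\<lambda>z. f z - g z) = I f - I g"
  using lin[of f g 1 "-1"] by simp

lemma I_scale: "f \<in> bcont \<Longrightarrow> I (\<lambda>z. a * f z) = a * I f"
  using lin[of f f a 0] by simp

lemma I_zero: "I (\<lambda>z. 0) = 0"
  using I_scale[of "\<lambda>z. 1" 0] by simp

lemma I_mono: "f \<in> bcont \<Longrightarrow> g \<in> bcont \<Longrightarrow> (\<And>z. f z \<le> g z) \<Longrightarrow> I f \<le> I g"
  using pos[of "\<lambda>z. g z - f z"] by (simp add: I_diff bcont_diff)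

lemma I_sum:
  "finite A \<Longrightarrow> (\<And>i. i \<in> A \<Longrightarrow> f i \<in> bcont) \<Longrightarrow> I (\<lambda>z. \<Sum>i\<in>A. f i z) = (\<Sum>i\<in>A. I (f i))"
  by (induction A rule: finite_induct) (simp_all add: I_zero I_add bcont_sum)

lemma I_monotone_convergence:
  assumes "f \<in> bcont" "\<And>n. g n \<in> bcont" "\<And>n z. g n z \<le> g (Suc n) z"
    and "\<And>z. (\<lambda>n. g n z) \<longlonglongrightarrow> f z"
  shows "(\<lambda>n. I (g n)) \<longlonglongrightarrow> I f"
proof -
  have le: "g n z \<le> f z" for n z
    using assms(3,4) by (intro incseq_le) (auto simp: incseq_Suc_iff)
  have "(\<lambda>n. I (\<lambda>z. f z - g n z)) \<longlonglongrightarrow> 0"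
  proof (rule daniell, safe)
    show "(\<lambda>z. f z - g n z) \<in> bcont" for n using assms(1,2) by (rule bcont_diff)
    show "0 \<le> f z - g n z" "f z - g (Suc n) z \<le> f z - g n z" for n z
      using le assms(3) by (auto simp: algebra_simps)
    show "(\<lambda>n. f z - g n z) \<longlonglongrightarrow> 0" for z
      using tendsto_diff[OF tendsto_const[of "f z"] assms(4)[of z]] by simp
  qed
  then have "(\<lambda>n. I f - (I f - I (g n))) \<longlonglongrightarrow> I f - 0"
    by (intro tendsto_diff tendsto_const) (simp add: I_diff assms(1,2))
  then show ?thesis by simp
qed

definition subordinate :: "'z set \<Rightarrow> ('z \<Rightarrow> real) set" where
  "subordinate U = {f \<in> bcont. \<forall>z. 0 \<le> f z \<and> f z \<le> indicator U z}"

definition inner_content :: "'z set \<Rightarrow> ennreal" where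
  "inner_content U = (SUP f\<in>subordinate U. ennreal (I f))"

definition outer_content :: "'z set \<Rightarrow> ennreal" where
  "outer_content A = (INF U\<in>{U. open U \<and> A \<subseteq> U}. inner_content U)"

lemma subordinate_mono: "U \<subseteq> V \<Longrightarrow> subordinate U \<subseteq> subordinate V"
  unfolding subordinate_def indicator_def by (auto split: if_splits) (metis order.trans zero_le_one)

lemma subordinate_le_1: "f \<in> subordinate U \<Longrightarrow> f z \<le> 1"
  unfolding subordinate_def by (auto intro: order_trans[OF _ indicator_le_1])

lemma zero_in_subordinate: "(\<lambda>z. 0) \<in> subordinate U"
  by (simp add: subordinate_def)

lemma inner_content_mono: "U \<subseteq> V \<Longrightarrow> inner_content U \<le> inner_content V"
  unfolding inner_content_def by (rule SUP_subset_mono[OF subordinate_mono]) auto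

lemma I_le_inner_content: "f \<in> subordinate U \<Longrightarrow> ennreal (I f) \<le> inner_content U"
  unfolding inner_content_def by (rule SUP_upper)

lemma inner_content_UNIV: "inner_content UNIV = 1"
proof (rule antisym)
  show "inner_content UNIV \<le> 1"
    unfolding inner_content_def
  proof (rule SUP_least)
    fix f assume "f \<in> subordinate UNIV"
    then have "I f \<le> I (\<lambda>z. 1)" by (intro I_mono) (auto simp: subordinate_def)
    then show "ennreal (I f) \<le> 1" by (simp add: one)
  qed
  have "(\<lambda>z. 1) \<in> subordinate UNIV" by (auto simp: subordinate_def)
  then show "1 \<le> inner_content UNIV" using I_le_inner_content[of "\<lambda>z. 1" UNIV] one by simp
qed

lemma inner_content_empty: "inner_content {} = 0"
proof -
  have "I f = 0" if "f \<in> subordinate {}" for f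
  proof -
    from that have "f = (\<lambda>z. 0)" by (auto simp: subordinate_def intro!: antisym le_funI)
    then show ?thesis by (simp add: I_zero)
  qed
  then show ?thesis unfolding inner_content_def by (auto intro!: antisym SUP_least)
qed

lemma outer_content_le_inner_content: "open U \<Longrightarrow> A \<subseteq> U \<Longrightarrow> outer_content A \<le> inner_content U"
  unfolding outer_content_def by (rule INF_lower) auto

lemma outer_content_open: "open U \<Longrightarrow> outer_content U = inner_content U"
  unfolding outer_content_def by (auto intro!: antisym INF_lower INF_greatest inner_content_mono)

lemma outer_content_mono: "A \<subseteq> B \<Longrightarrow> outer_content A \<le> outer_content B"
  unfolding outer_content_def by (rule INF_superset_mono) auto

lemma outer_content_empty: "outer_content {} = 0"
  using outer_content_le_inner_content[of "{}" "{}"] inner_content_empty by simp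

lemma I_le_suminf_inner_content:
  assumes g: "g \<in> bcont" "\<And>z. g z \<le> (\<Sum>i<N. f i z)" and f: "\<And>i. f i \<in> subordinate (U i)"
  shows "ennreal (I g) \<le> (\<Sum>n. inner_content (U n))"
proof -
  have "I g \<le> (\<Sum>i<N. I (f i))"
    using f g by (subst I_sum[symmetric]) (auto simp: subordinate_def intro!: I_mono bcont_sum)
  then have "ennreal (I g) \<le> (\<Sum>i<N. ennreal (I (f i)))"
    using f by (subst sum_ennreal) (auto simp: subordinate_def intro!: pos ennreal_leI)
  also have "\<dots> \<le> (\<Sum>i<N. inner_content (U i))" by (intro sum_mono I_le_inner_content f)
  also have "\<dots> \<le> (\<Sum>n. inner_content (U n))" by (rule sum_le_suminf) auto
  finally show ?thesis .
qed

lemma inner_content_countable_subadd: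
  assumes opn: "\<And>n. open (U n)"
  shows "inner_content (\<Union>n. U n) \<le> (\<Sum>n. inner_content (U n))"
  unfolding inner_content_def[of "\<Union>n. U n"]
proof (rule SUP_least)
  fix f assume f: "f \<in> subordinate (\<Union>n. U n)"
  then have fb: "f \<in> bcont" and f0: "\<And>z. 0 \<le> f z" and fle: "\<And>z. f z \<le> indicator (\<Union>n. U n) z"
    by (auto simp: subordinate_def)
  have "\<exists>h. h \<in> bcont \<and> (\<forall>z. 0 \<le> h z) \<and> (\<forall>z. 0 < h z \<longleftrightarrow> z \<in> U i)" for i
    by (rule bcont_positive_on_open[OF opn[of i]]) blast
  then obtain h where hb: "\<And>i. h i \<in> bcont" and h0: "\<And>i z. 0 \<le> h i z"
    and hpos: "\<And>i z. 0 < h i z \<longleftrightarrow> z \<in> U i"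
    by metis
  txt \<open>The functions \<open>g N\<close> increase to \<open>f\<close>, and each is dominated by a sum of
    functions subordinate to \<open>U 0, \<dots>, U (N - 1)\<close>.\<close>
  define g where "g N z = min (f z) (real N * (\<Sum>i<N. h i z))" for N z
  define f_part where "f_part N i z = min (f z) (real N * h i z)" for N i z
  have gb: "g N \<in> bcont" for N
    unfolding g_def by (intro bcont_min fb bcont_scale bcont_sum hb) auto
  have f_part_sub: "f_part N i \<in> subordinate (U i)" for N i
  proof -
    have "h i z = 0" if "z \<notin> U i" for z using h0[of i z] hpos[of i z] that by simp
    then have "f_part N i z \<le> indicator (U i) z" for z
      using subordinate_le_1[OF f, of z] by (auto simp: f_part_def indicator_def min_le_iff_disj)
    moreover have "0 \<le> f_part N i z" for z using f0 h0 by (simp add: f_part_def)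
    ultimately show ?thesis
      unfolding subordinate_def f_part_def by (auto intro!: bcont_min bcont_scale fb hb)
  qed
  have "g N z \<le> (\<Sum>i<N. f_part N i z)" for N z
    unfolding g_def f_part_def sum_distrib_left using f0 h0 by (intro min_sum_le) auto
  then have "ennreal (I (g N)) \<le> (\<Sum>n. inner_content (U n))" for N
    by (rule I_le_suminf_inner_content[OF gb _ f_part_sub])
  moreover have "(\<lambda>N. I (g N)) \<longlonglongrightarrow> I f"
  proof (rule I_monotone_convergence[OF fb gb])
    show "g N z \<le> g (Suc N) z" for N z
    proof -
      have "real N * (\<Sum>i<N. h i z) \<le> real (Suc N) * (\<Sum>i<Suc N. h i z)"
        using h0 by (intro mult_mono sum_mono2 sum_nonneg) auto
      then show ?thesis by (auto simp: g_def)
    qed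
    show "(\<lambda>N. g N z) \<longlonglongrightarrow> f z" for z
    proof -
      have "\<exists>j. 0 < h j z" if "0 < f z"
        using fle[of z] that hpos by (cases "\<exists>j. z \<in> U j") (auto simp: indicator_def)
      then show ?thesis unfolding g_def using f0 h0 by (intro tendsto_min_scaled_sum) auto
    qed
  qed
  ultimately show "ennreal (I f) \<le> (\<Sum>n. inner_content (U n))"
    by (intro LIMSEQ_le_const2[OF tendsto_ennrealI]) auto
qed

lemma outer_content_countable_subadd: "outer_content (\<Union>i. A i) \<le> (\<Sum>n. outer_content (A n))"
proof (rule ennreal_le_epsilon)
  fix e :: real assume "0 < e" "(\<Sum>n. outer_content (A n)) < top"
  then have less: "\<And>n. outer_content (A n) < outer_content (A n) + e * (1/2)^Suc n"
    by (auto simp add: less_top dest!: ennreal_suminf_lessD)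
  have "\<exists>B. open B \<and> A n \<subseteq> B \<and> inner_content B \<le> outer_content (A n) + e * (1/2)^Suc n" for n
    using less[of n] unfolding outer_content_def[of "A n"] INF_less_iff by (auto intro: less_imp_le)
  then obtain B where B: "\<And>n. open (B n)" "\<And>n. A n \<subseteq> B n"
    and Ble: "\<And>n. inner_content (B n) \<le> outer_content (A n) + e * (1/2)^Suc n" by metis
  have "outer_content (\<Union>i. A i) \<le> inner_content (\<Union>i. B i)"
    using B by (intro outer_content_le_inner_content) auto
  also have "\<dots> \<le> (\<Sum>n. inner_content (B n))" using B by (intro inner_content_countable_subadd)
  also have "\<dots> \<le> (\<Sum>n. outer_content (A n) + e * (1/2) ^ Suc n)"
    by (intro suminf_le Ble) auto
  also have "\<dots> = (\<Sum>n. outer_content (A n)) + (\<Sum>n. ennreal e * ennreal ((1/2) ^ Suc n))"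
    using \<open>0 < e\<close> by (subst suminf_add[symmetric])
                     (auto simp del: ennreal_suminf_cmult simp add: ennreal_mult[symmetric])
  also have "\<dots> = (\<Sum>n. outer_content (A n)) + e"
    unfolding ennreal_suminf_cmult
    by (subst suminf_ennreal_eq[OF zero_le_power power_half_series]) auto
  finally show "outer_content (\<Union>i. A i) \<le> (\<Sum>n. outer_content (A n)) + e" .
qed

lemma outer_content_subadd: "outer_content (A \<union> B) \<le> outer_content A + outer_content B"
proof -
  have "outer_content (A \<union> B) = outer_content (\<Union>n. binaryset A B n)" by (simp add: UN_binaryset_eq)
  also have "\<dots> \<le> (\<Sum>n. outer_content (binaryset A B n))" by (rule outer_content_countable_subadd)
  also have "\<dots> = outer_content A + outer_content B"
    by (rule suminf_binaryset_eq) (rule outer_content_empty)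
  finally show ?thesis .
qed

lemma I_plus_inner_content_le:
  assumes f: "f \<in> subordinate V" and W: "W \<subseteq> V" "\<And>z. z \<in> W \<Longrightarrow> f z = 0"
  shows "ennreal (I f) + inner_content W \<le> inner_content V"
proof -
  have "ennreal (I f) + inner_content W = (SUP g\<in>subordinate W. ennreal (I f) + ennreal (I g))"
    unfolding inner_content_def[of W] by (rule ennreal_SUP_add_right) (auto intro: zero_in_subordinate)
  also have "\<dots> \<le> inner_content V"
  proof (rule SUP_least)
    fix g assume g: "g \<in> subordinate W"
    have "f z + g z \<le> indicator V z" for z
    proof -
      have "0 \<le> f z" "f z \<le> indicator V z" "0 \<le> g z" "g z \<le> indicator W z"
        using f g by (auto simp: subordinate_def)
      then show ?thesis using W by (cases "z \<in> W") (auto simp: indicator_def)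
    qed
    then have "(\<lambda>z. f z + g z) \<in> subordinate V"
      using f g by (auto simp: subordinate_def intro!: bcont_add add_nonneg_nonneg)
    then have "ennreal (I (\<lambda>z. f z + g z)) \<le> inner_content V" by (rule I_le_inner_content)
    moreover have "0 \<le> I f" "0 \<le> I g" using f g by (auto simp: subordinate_def intro!: pos)
    ultimately show "ennreal (I f) + ennreal (I g) \<le> inner_content V"
      using f g by (simp add: I_add subordinate_def ennreal_plus)
  qed
  finally show ?thesis .
qed

text \<open>\<open>(f - d)\<^sup>+\<close> vanishes on an open set \<open>W \<supseteq> V - U\<close>, so adding to it a function subordinate to
  \<open>W\<close> stays subordinate to \<open>V\<close>.\<close>

lemma inner_content_split_approx:
  assumes U: "open U" and V: "open V" and f: "f \<in> subordinate (V \<inter> U)" and d: "0 < d"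
  shows "ennreal (I f - d) + outer_content (V - U) \<le> inner_content V"
proof -
  from f have fb: "f \<in> bcont" and f0: "\<And>z. 0 \<le> f z" and fle: "\<And>z. f z \<le> indicator (V \<inter> U) z"
    by (auto simp: subordinate_def)
  define f' where "f' z = max 0 (f z - d)" for z
  have f'b: "f' \<in> bcont"
    unfolding f'_def[abs_def] by (rule bcont_max[OF bcont_const bcont_diff[OF fb bcont_const]])
  have "I f \<le> I (\<lambda>z. f' z + d)"
    by (rule I_mono[OF fb bcont_add[OF f'b bcont_const]]) (auto simp: f'_def)
  also have "\<dots> = I f' + d" using lin[OF f'b bcont_const[of 1], of 1 d] one by simp
  finally have shift: "ennreal (I f - d) \<le> ennreal (I f')" by (intro ennreal_leI) simp

  define W where "W = V - {z. d \<le> f z}"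
  have "open W"
    unfolding W_def using V fb by (intro open_Diff closed_Collect_le continuous_intros) (auto elim: bcontE)
  have "V - U \<subseteq> W"
  proof
    fix z assume "z \<in> V - U"
    then show "z \<in> W" using fle[of z] d by (auto simp: W_def)
  qed
  then have "outer_content (V - U) \<le> inner_content W"
    using \<open>open W\<close> by (rule outer_content_le_inner_content[rotated])
  moreover have "f' \<in> subordinate V"
  proof -
    have "f' z \<le> indicator V z" for z
      using fle[of z] f0[of z] d by (cases "z \<in> U"; cases "z \<in> V") (auto simp: f'_def)
    then show ?thesis using f'b by (auto simp: subordinate_def f'_def)
  qed
  then have "ennreal (I f') + inner_content W \<le> inner_content V"
    by (rule I_plus_inner_content_le) (auto simp: W_def f'_def)
  ultimately show ?thesis
    using shift by (meson add_mono order_trans)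
qed

lemma inner_content_split:
  assumes "open U" "open V"
  shows "inner_content (V \<inter> U) + outer_content (V - U) \<le> inner_content V"
proof -
  have "ennreal (I f) + outer_content (V - U) \<le> inner_content V" if f: "f \<in> subordinate (V \<inter> U)" for f
  proof (rule ennreal_le_epsilon)
    fix e :: real assume "0 < e"
    have "ennreal (I f) \<le> ennreal (I f - e) + ennreal e"
      using \<open>0 < e\<close> by (cases "I f - e \<ge> 0") (auto simp: ennreal_plus[symmetric] ennreal_neg intro!: ennreal_leI)
    then have "ennreal (I f) + outer_content (V - U) \<le> ennreal (I f - e) + outer_content (V - U) + ennreal e"
      by (metis add.commute add.left_commute add_right_mono)
    also have "\<dots> \<le> inner_content V + ennreal e"
      using inner_content_split_approx[OF assms(1,2) f \<open>0 < e\<close>] by (rule add_right_mono)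
    finally show "ennreal (I f) + outer_content (V - U) \<le> inner_content V + ennreal e" .
  qed
  then have "(SUP f\<in>subordinate (V \<inter> U). ennreal (I f) + outer_content (V - U)) \<le> inner_content V"
    by (rule SUP_least)
  moreover have "inner_content (V \<inter> U) + outer_content (V - U)
      = (SUP f\<in>subordinate (V \<inter> U). ennreal (I f) + outer_content (V - U))"
    unfolding inner_content_def[of "V \<inter> U"]
    by (rule ennreal_SUP_add_left[symmetric]) (auto intro: zero_in_subordinate)
  ultimately show ?thesis by simp
qed

lemma open_in_lambda_system:
  assumes "open U" shows "U \<in> lambda_system UNIV (Pow UNIV) outer_content"
  unfolding lambda_system_def
proof safe
  fix A :: "'z set"
  show "outer_content (U \<inter> A) + outer_content ((UNIV - U) \<inter> A) = outer_content A"
  proof (rule antisym)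
    show "outer_content (U \<inter> A) + outer_content ((UNIV - U) \<inter> A) \<le> outer_content A"
      unfolding outer_content_def[of A]
    proof (rule INF_greatest)
      fix V assume V: "V \<in> {V. open V \<and> A \<subseteq> V}"
      have "outer_content (U \<inter> A) + outer_content ((UNIV - U) \<inter> A)
          \<le> inner_content (V \<inter> U) + outer_content (V - U)"
        using V assms by (intro add_mono outer_content_le_inner_content outer_content_mono) auto
      also have "\<dots> \<le> inner_content V" using V assms by (intro inner_content_split) auto
      finally show "outer_content (U \<inter> A) + outer_content ((UNIV - U) \<inter> A) \<le> inner_content V" .
    qed
    have "outer_content A \<le> outer_content ((U \<inter> A) \<union> ((UNIV - U) \<inter> A))"
      by (rule outer_content_mono) auto
    also have "\<dots> \<le> outer_content (U \<inter> A) + outer_content ((UNIV - U) \<inter> A)"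
      by (rule outer_content_subadd)
    finally show "outer_content A \<le> outer_content (U \<inter> A) + outer_content ((UNIV - U) \<inter> A)" .
  qed
qed simp

lemma outer_measure_space_outer_content: "outer_measure_space (Pow UNIV) outer_content"
  unfolding outer_measure_space_def positive_def increasing_def countably_subadditive_def
  using outer_content_empty outer_content_mono outer_content_countable_subadd by auto

definition repr_measure :: "'z measure" where
  "repr_measure = measure_of UNIV (sets borel) outer_content"

lemma
  shows sets_repr_measure: "sets repr_measure = sets borel"
    and emeasure_repr_measure: "A \<in> sets borel \<Longrightarrow> emeasure repr_measure A = outer_content A"
proof -
  have ms: "measure_space UNIV (lambda_system UNIV (Pow UNIV) outer_content) outer_content"
    by (rule sigma_algebra.caratheodory_lemma[OF sigma_algebra_Pow outer_measure_space_outer_content])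
  then have "sigma_algebra UNIV (lambda_system UNIV (Pow UNIV) outer_content)"
    by (simp add: measure_space_def)
  then have sub: "sets borel \<subseteq> lambda_system UNIV (Pow UNIV) outer_content"
    unfolding sets_borel
    by (rule sigma_algebra.sigma_sets_subset) (auto intro: open_in_lambda_system[unfolded Pow_UNIV])
  have "measure_space UNIV (sets borel) outer_content"
    by (rule measure_down[OF ms _ sub]) (metis sets.sigma_algebra_axioms space_borel)
  then show "A \<in> sets borel \<Longrightarrow> emeasure repr_measure A = outer_content A"
    unfolding repr_measure_def by (intro emeasure_measure_of_sigma) (auto simp: measure_space_def)
  show "sets repr_measure = sets borel"
    unfolding repr_measure_def by (simp add: sets.sigma_sets_eq[of borel, simplified])
qed

lemma space_repr_measure: "space repr_measure = UNIV"
  using sets_eq_imp_space_eq[OF sets_repr_measure] by simp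

lemma prob_space_repr_measure: "prob_space repr_measure"
  by (rule prob_spaceI) (simp add: space_repr_measure emeasure_repr_measure outer_content_open inner_content_UNIV)

interpretation repr: prob_space repr_measure
  by (rule prob_space_repr_measure)

lemma integrable_repr_measure: "f \<in> bcont \<Longrightarrow> integrable repr_measure f"
  by (rule bcont_integrable[OF _ repr.finite_measure_axioms sets_repr_measure])

lemma inner_content_eq_measure: "open U \<Longrightarrow> inner_content U = ennreal (measure repr_measure U)"
  by (simp add: emeasure_repr_measure outer_content_open repr.emeasure_eq_measure[symmetric])

lemma I_integral_squeeze:
  assumes h: "h \<in> bcont" and U: "open U" "open U'"
    and lower: "\<And>z. indicator U' z \<le> h z" and upper: "\<And>z. h z \<le> indicator U z"
  shows "\<bar>I h - (\<integral>z. h z \<partial>repr_measure)\<bar> \<le> measure repr_measure U - measure repr_measure U'"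
proof -
  have h0: "0 \<le> h z" for z by (rule order_trans[OF indicator_pos_le lower])
  have ind: "integrable repr_measure (indicator S :: 'z \<Rightarrow> real)" if "open S" for S
    using that by (intro integrable_real_indicator) (auto simp: sets_repr_measure less_top[symmetric])
  have hU: "h \<in> subordinate U" using h h0 upper by (simp add: subordinate_def)
  have "I h \<le> measure repr_measure U"
    using I_le_inner_content[OF hU] inner_content_eq_measure[OF U(1)] by (simp add: ennreal_le_iff)
  moreover have "measure repr_measure U' \<le> I h"
  proof -
    have "ennreal (I f) \<le> ennreal (I h)" if "f \<in> subordinate U'" for f
    proof (rule ennreal_leI, rule I_mono)
      show "f \<in> bcont" "f z \<le> h z" for z
        using that lower[of z] by (auto simp: subordinate_def intro: order_trans)
    qed (rule h)
    then have "inner_content U' \<le> ennreal (I h)"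
      unfolding inner_content_def by (rule SUP_least)
    then show ?thesis using inner_content_eq_measure[OF U(2)] pos[OF h] h0 by (simp add: ennreal_le_iff)
  qed
  moreover have "(\<integral>z. h z \<partial>repr_measure) \<le> measure repr_measure U"
    using integral_mono[OF integrable_repr_measure[OF h] ind[OF U(1)]] upper
    by (simp add: sets_repr_measure U(1))
  moreover have "measure repr_measure U' \<le> (\<integral>z. h z \<partial>repr_measure)"
    using integral_mono[OF ind[OF U(2)] integrable_repr_measure[OF h]] lower
    by (simp add: sets_repr_measure U(2))
  ultimately show ?thesis by linarith
qed

lemma I_integral_diff_le:
  assumes g: "g \<in> bcont" "\<And>z. 0 \<le> g z" "\<And>z. g z \<le> 1" and N: "0 < N"
  shows "\<bar>I g - (\<integral>z. g z \<partial>repr_measure)\<bar> \<le> 1 / real N"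
proof -
  txt \<open>Cut \<open>N * g\<close> into \<open>N\<close> layers of height one; both \<open>I\<close> and the integral of the
    \<open>i\<close>-th layer lie between the measures of two consecutive superlevel sets, which telescope.\<close>
  define layer where "layer i z = min 1 (max 0 (real N * g z - real i))" for i :: nat and z
  define U where "U i = {z. real i < real N * g z}" for i :: nat
  have layer_bcont: "layer i \<in> bcont" for i
    unfolding layer_def[abs_def]
    by (intro bcont_min bcont_max bcont_diff bcont_scale g bcont_const)
  have U_open: "open (U i)" for i
    unfolding U_def using g(1) by (intro open_Collect_less continuous_intros) (auto elim: bcontE)
  have layers_sum: "(\<Sum>i<N. layer i z) = real N * g z" for z
    using g(2,3)[of z] by (simp add: layer_def sum_clamped_layers mult_left_le)
  have I_layers: "real N * I g = (\<Sum>i<N. I (layer i))"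
    using layer_bcont by (simp add: layers_sum[symmetric] I_sum I_scale[OF g(1), symmetric])
  have "real N * (\<integral>z. g z \<partial>repr_measure) = (\<integral>z. (\<Sum>i<N. layer i z) \<partial>repr_measure)"
    by (simp add: layers_sum)
  also have "\<dots> = (\<Sum>i<N. \<integral>z. layer i z \<partial>repr_measure)"
    by (rule Bochner_Integration.integral_sum) (auto intro: integrable_repr_measure layer_bcont)
  finally have "\<bar>real N * I g - real N * (\<integral>z. g z \<partial>repr_measure)\<bar>
      = \<bar>\<Sum>i<N. I (layer i) - (\<integral>z. layer i z \<partial>repr_measure)\<bar>"
    by (simp add: I_layers sum_subtractf)
  also have "\<dots> \<le> (\<Sum>i<N. measure repr_measure (U i) - measure repr_measure (U (Suc i)))"
    by (intro order_trans[OF sum_abs] sum_mono I_integral_squeeze layer_bcont U_open)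
      (auto simp: layer_def U_def indicator_def)
  also have "\<dots> = measure repr_measure (U 0) - measure repr_measure (U N)"
    by (rule sum_lessThan_telescope')
  also have "\<dots> \<le> 1" using repr.prob_le_1[of "U 0"] measure_nonneg[of repr_measure "U N"] by linarith
  finally have "real N * \<bar>I g - (\<integral>z. g z \<partial>repr_measure)\<bar> \<le> 1"
    by (simp add: right_diff_distrib[symmetric] abs_mult)
  then show ?thesis using N by (simp add: field_simps)
qed

lemma I_eq_integral_unit_interval:
  assumes "g \<in> bcont" "\<And>z. 0 \<le> g z" "\<And>z. g z \<le> 1"
  shows "I g = (\<integral>z. g z \<partial>repr_measure)"
proof -
  have "\<bar>I g - (\<integral>z. g z \<partial>repr_measure)\<bar> \<le> 0"
  proof (rule LIMSEQ_le_const[OF lim_inverse_n])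
    show "\<exists>N. \<forall>n\<ge>N. \<bar>I g - (\<integral>z. g z \<partial>repr_measure)\<bar> \<le> inverse (real n)"
      using I_integral_diff_le[OF assms] by (auto simp: divide_inverse intro!: exI[of _ 1])
  qed
  then show ?thesis by simp
qed

lemma I_eq_integral:
  assumes f: "f \<in> bcont" shows "I f = (\<integral>z. f z \<partial>repr_measure)"
proof -
  obtain B0 where B0: "\<And>z. \<bar>f z\<bar> \<le> B0" using f bcontE by metis
  define B where "B = \<bar>B0\<bar> + 1"
  have B: "0 < B" "\<bar>f z\<bar> \<le> B" for z using B0[of z] by (auto simp: B_def)
  define g where "g z = (f z + B) / (2 * B)" for z
  have g_bcont: "g \<in> bcont"
    unfolding g_def[abs_def] by (intro bcont_scale[of _ "1 / (2 * B)", simplified] bcont_add f bcont_const)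
  have "0 \<le> g z" "g z \<le> 1" for z
    using B(1) B(2)[of z] by (auto simp: g_def field_simps abs_le_iff)
  then have g_eq: "I g = (\<integral>z. g z \<partial>repr_measure)"
    by (intro I_eq_integral_unit_interval g_bcont)
  have f_eq: "f = (\<lambda>z. (2 * B) * g z + (- B) * 1)" using B(1) by (auto simp: g_def field_simps)
  have "I f = (2 * B) * I g - B" 
    by (subst f_eq) (use lin[OF g_bcont bcont_const[of 1], of "2 * B" "- B"] one in simp)
  also have "\<dots> = (\<integral>z. (2 * B) * g z + (- B) * 1 \<partial>repr_measure)"
    using integrable_repr_measure[OF g_bcont] by (simp add: g_eq repr.prob_space)
  also have "\<dots> = (\<integral>z. f z \<partial>repr_measure)" by (subst (2) f_eq) (rule refl)
  finally show ?thesis .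
qed

end

section \<open>Dini's theorem, cutoffs and tightness\<close>

lemma dini_eventually_less:
  fixes f :: "nat \<Rightarrow> 'z::metric_space \<Rightarrow> real"
  assumes C: "compact C" and cont: "\<And>n. continuous_on UNIV (f n)"
    and dec: "\<And>n z. f (Suc n) z \<le> f n z" and lim: "\<And>z. (\<lambda>n. f n z) \<longlonglongrightarrow> 0" and d: "0 < d"
  obtains N where "\<And>n z. N \<le> n \<Longrightarrow> z \<in> C \<Longrightarrow> f n z < d"
proof -
  have "\<exists>n. f n z < d" for z
    using order_tendstoD(2)[OF lim[of z] d] by (auto simp: eventually_sequentially)
  then obtain nz where nz: "\<And>z. f (nz z) z < d" by metis
  have "open {y. f (nz z) y < d}" for z by (intro open_Collect_less cont continuous_intros)
  then obtain T where T: "finite T" "C \<subseteq> (\<Union>t\<in>T. {y. f (nz t) y < d})"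
    by (rule compactE_image[OF C, of C "\<lambda>z. {y. f (nz z) y < d}"]) (use nz in auto)
  show ?thesis
  proof
    fix n z assume n: "(\<Sum>t\<in>T. nz t) \<le> n" and "z \<in> C"
    then obtain t where t: "t \<in> T" "f (nz t) z < d" using T(2) by auto
    have "nz t \<le> n" using n member_le_sum[OF t(1), of nz] T(1) by simp
    moreover have "decseq (\<lambda>n. f n z)" using dec by (simp add: decseq_Suc_iff)
    ultimately have "f n z \<le> f (nz t) z" using decseqD by metis
    then show "f n z < d" using t(2) by simp
  qed
qed

lemma compact_neighbourhood:
  fixes K :: "'z::topological_space set"
  assumes lc: "loc_compact_type TYPE('z)" and K: "compact K"
  obtains W K' where "open W" "compact K'" "K \<subseteq> W" "W \<subseteq> K'"
proof -
  have "\<forall>x::'z. \<exists>U C. open U \<and> compact C \<and> x \<in> U \<and> U \<subseteq> C"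
    using lc by (simp add: loc_compact_type_def)
  then obtain U :: "'z \<Rightarrow> 'z set" where "\<forall>x. \<exists>C. open (U x) \<and> compact C \<and> x \<in> U x \<and> U x \<subseteq> C"
    by (metis choice)
  then obtain C :: "'z \<Rightarrow> 'z set" where "\<forall>x. open (U x) \<and> compact (C x) \<and> x \<in> U x \<and> U x \<subseteq> C x"
    by (metis choice)
  then have UC: "\<And>x. open (U x)" "\<And>x. compact (C x)" "\<And>x. x \<in> U x" "\<And>x. U x \<subseteq> C x"
    by auto
  obtain T where T: "finite T" "K \<subseteq> (\<Union>t\<in>T. U t)"
    by (rule compactE_image[OF K, of K U]) (use UC in auto)
  show ?thesis
  proof (rule that[of "\<Union>t\<in>T. U t" "\<Union>t\<in>T. C t"])
    show "compact (\<Union>t\<in>T. C t)" using T(1) UC(2) by (intro compact_UN) auto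
  qed (use UC T in blast)+
qed

lemma compact_cutoff:
  fixes K :: "'z::metric_space set"
  assumes lc: "loc_compact_type TYPE('z)" and K: "compact K"
  obtains \<phi> K' where "compact K'" "continuous_on UNIV \<phi>" "\<And>z. 0 \<le> \<phi> z" "\<And>z. \<phi> z \<le> 1"
    "\<And>z. z \<in> K \<Longrightarrow> \<phi> z = 1" "\<And>z. z \<notin> K' \<Longrightarrow> \<phi> z = (0::real)"
proof (cases "K = {}")
  case True
  then show ?thesis by (intro that[of "{}" "\<lambda>z. 0"]) auto
next
  case False
  obtain W K' where W: "open W" "compact K'" "K \<subseteq> W" "W \<subseteq> K'"
    by (rule compact_neighbourhood[OF lc K]) (rule that)
  obtain e where e: "e > 0" "(\<Union>x\<in>K. ball x e) \<subseteq> W"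
    by (rule compact_subset_open_imp_ball_epsilon_subset[OF K W(1,3)])
  define \<phi> where "\<phi> z = max 0 (1 - infdist z K / e)" for z
  show ?thesis
  proof (rule that[of K' \<phi>])
    show "continuous_on UNIV \<phi>" unfolding \<phi>_def[abs_def] using e by (intro continuous_intros) auto
    show "0 \<le> \<phi> z" "\<phi> z \<le> 1" for z
      using divide_nonneg_pos[OF infdist_nonneg[of z K] e(1)] by (auto simp: \<phi>_def)
    show "z \<in> K \<Longrightarrow> \<phi> z = 1" for z by (simp add: \<phi>_def)
    show "\<phi> z = 0" if "z \<notin> K'" for z
    proof (rule ccontr)
      assume "\<phi> z \<noteq> 0"
      then have "1 - infdist z K / e > 0" unfolding \<phi>_def by (metis max.absorb1 not_less)
      then have "infdist z K < e" using e by (simp add: field_simps)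
      moreover have "bdd_below ((\<lambda>a. dist z a) ` K)" by (rule bdd_belowI[where m=0]) auto
      ultimately obtain x where x: "x \<in> K" "dist z x < e"
        unfolding infdist_notempty[OF \<open>K \<noteq> {}\<close>] using cINF_less_iff[OF \<open>K \<noteq> {}\<close>] by blast
      then have "z \<in> ball x e" by (simp add: dist_commute)
      then show False using e(2) x(1) W(4) that by blast
    qed
  qed (rule W(2))
qed

lemma finite_measure_tight:
  fixes M :: "'z::metric_space measure"
  assumes sc: "sigma_compact_type TYPE('z)" and "finite_measure M" "sets M = sets borel" "0 < e"
  obtains K where "compact K" "measure M (UNIV - K) < e"
proof -
  interpret finite_measure M by fact
  have space: "space M = UNIV" using sets_eq_imp_space_eq[OF assms(3)] by simp
  obtain Kn :: "nat \<Rightarrow> 'z set" where Kn: "\<And>n. compact (Kn n)" "(\<Union>n. Kn n) = UNIV"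
    using sc unfolding sigma_compact_type_def by blast
  define A where "A N = (\<Union>n\<le>N. Kn n)" for N
  have A_compact: "compact (A N)" for N unfolding A_def using Kn(1) by (intro compact_UN) auto
  have A_sets: "range A \<subseteq> sets M"
    using A_compact by (auto simp: assms(3) intro: borel_closed compact_imp_closed)
  have "(\<lambda>N. measure M (A N)) \<longlonglongrightarrow> measure M (\<Union>N. A N)"
    by (rule finite_Lim_measure_incseq[OF A_sets])
      (unfold A_def incseq_def, auto, meson atMost_iff order_trans)
  moreover have "(\<Union>N. A N) = UNIV" using Kn(2) by (auto simp: A_def)
  ultimately have "(\<lambda>N. measure M UNIV - measure M (A N)) \<longlonglongrightarrow> 0"
    using tendsto_diff[OF tendsto_const[of "measure M UNIV"]] by fastforce
  then have "eventually (\<lambda>N. measure M UNIV - measure M (A N) < e) sequentially"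
    using assms(4) by (rule order_tendstoD(2))
  then obtain N where "measure M UNIV - measure M (A N) < e"
    by (auto simp: eventually_sequentially)
  moreover have "measure M (UNIV - A N) = measure M UNIV - measure M (A N)"
    using A_sets sets.top[of M] by (intro finite_measure_Diff) (auto simp: space)
  ultimately show ?thesis using A_compact that by metis
qed

lemma tail_cutoff_small_integral:
  fixes M :: "'z::metric_space measure"
  assumes "loc_compact_type TYPE('z)" "sigma_compact_type TYPE('z)"
    and M: "finite_measure M" "sets M = sets borel" and e: "0 < e"
  obtains q K where "compact K" "q \<in> bcont" "\<And>z. 0 \<le> q z" "\<And>z. z \<notin> K \<Longrightarrow> q z = 1"
    "(\<integral>z. q z \<partial>M) < e"
proof -
  interpret finite_measure M by fact
  obtain K0 where K0: "compact K0" "measure M (UNIV - K0) < e"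
    using finite_measure_tight[OF assms(2) M e] .
  obtain \<phi> :: "'z \<Rightarrow> real" and K where \<phi>: "compact K" "continuous_on UNIV \<phi>" "\<And>z. 0 \<le> \<phi> z" "\<And>z. \<phi> z \<le> 1"
    "\<And>z. z \<in> K0 \<Longrightarrow> \<phi> z = 1" "\<And>z. z \<notin> K \<Longrightarrow> \<phi> z = 0"
    using compact_cutoff[OF assms(1) K0(1)] by metis
  have q: "(\<lambda>z. 1 - \<phi> z) \<in> bcont"
    using \<phi>(2-4) by (intro bcontI[where B=1]) (auto intro!: continuous_intros)
  have K0_sets: "UNIV - K0 \<in> sets M"
    using K0(1) by (auto simp: M(2) intro: borel_closed compact_imp_closed)
  have "integrable M (indicator (UNIV - K0) :: 'z \<Rightarrow> real)"
    using K0_sets by (intro integrable_real_indicator) (auto simp: less_top[symmetric])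
  then have "(\<integral>z. 1 - \<phi> z \<partial>M) \<le> (\<integral>z. indicator (UNIV - K0) z \<partial>M)"
    by (rule integral_mono[OF bcont_integrable[OF q M]]) (use \<phi>(3-5) in \<open>auto simp: indicator_def\<close>)
  also have "\<dots> < e" using K0_sets K0(2) by simp
  finally show ?thesis using that[OF \<phi>(1) q] \<phi>(4,6) by simp
qed

lemma tendsto_integral_infdist_open:
  fixes M :: "'z::metric_space measure"
  assumes "finite_measure M" "sets M = sets borel" "open U" "U \<noteq> UNIV"
  shows "(\<lambda>n. \<integral>z. min 1 (real n * infdist z (- U)) \<partial>M) \<longlonglongrightarrow> measure M U"
proof -
  interpret finite_measure M by fact
  have space: "space M = UNIV" using sets_eq_imp_space_eq[OF assms(2)] by simp
  have "(\<lambda>n. \<integral>z. min 1 (real n * infdist z (- U)) \<partial>M) \<longlonglongrightarrow> (\<integral>z. indicator U z \<partial>M)"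
  proof (rule integral_dominated_convergence[where w="\<lambda>z. 1"])
    show "AE z in M. (\<lambda>n. min 1 (real n * infdist z (- U))) \<longlonglongrightarrow> indicator U z"
    proof (rule AE_I2)
      fix z
      show "(\<lambda>n. min 1 (real n * infdist z (- U))) \<longlonglongrightarrow> indicator U z"
      proof (cases "z \<in> U")
        case True
        then have d: "0 < infdist z (- U)" using assms(3,4) by (intro infdist_pos_not_in_closed) auto
        have eq1: "min 1 (real n * infdist z (- U)) = 1" if "nat \<lceil>1 / infdist z (- U)\<rceil> \<le> n" for n
          using that d by (simp add: divide_le_eq mult.commute)
        show ?thesis
          using True eq1
          by (intro tendsto_eventually eventually_sequentiallyI[of "nat \<lceil>1 / infdist z (- U)\<rceil>"]) auto
      qed simp
    qed
  qed (use assms(2,3) in \<open>auto simp: measurable_cong_sets[OF assms(2) refl] infdist_nonneg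
      intro!: borel_measurable_continuous_onI continuous_intros\<close>)
  then show ?thesis using assms(2,3) by (simp add: space)
qed

lemma measure_eqI_bcont:
  fixes M N :: "'z::metric_space measure"
  assumes M: "finite_measure M" "sets M = sets borel" and N: "finite_measure N" "sets N = sets borel"
    and eq: "\<And>g. g \<in> bcont \<Longrightarrow> (\<integral>z. g z \<partial>M) = (\<integral>z. g z \<partial>N)"
  shows "M = N"
proof -
  have space: "space M = UNIV" "space N = UNIV"
    using sets_eq_imp_space_eq[OF M(2)] sets_eq_imp_space_eq[OF N(2)] by auto
  have "measure M U = measure N U" if U: "open U" for U
  proof (cases "U = UNIV")
    case True
    then show ?thesis using eq[of "\<lambda>z. 1"] space by simp
  next
    case False
    have "(\<lambda>z. min 1 (real n * infdist z (- U))) \<in> bcont" for n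
      by (rule bcontI[where B=1]) (auto intro!: continuous_intros simp: infdist_nonneg)
    then show ?thesis
      using tendsto_integral_infdist_open[OF M U False] tendsto_integral_infdist_open[OF N U False]
      by (simp add: eq LIMSEQ_unique)
  qed
  then show ?thesis
  proof (intro measure_eqI_generator_eq[where E="{S. open S}" and \<Omega>=UNIV and A="\<lambda>_. UNIV"])
    show "sets M = sigma_sets UNIV {S. open S}" "sets N = sigma_sets UNIV {S. open S}"
      using M(2) N(2) by (simp_all add: sets_borel)
  qed (auto simp: Int_stable_def finite_measure.emeasure_eq_measure[OF M(1)]
      finite_measure.emeasure_eq_measure[OF N(1)])
qed

section \<open>Weighted spaces \<open>C\<^sub>b\<^sub>,\<^sub>k\<close>\<close>

lemma nX_nonneg: "0 \<le> nX x0 x"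
  by (simp add: nX_def)

lemma nXY_nonneg: "0 \<le> nXY x0 y0 z"
  by (simp add: nXY_def)

lemma continuous_on_nX: "continuous_on UNIV (nX x0)"
  unfolding nX_def[abs_def] by (intro continuous_intros)

lemma continuous_on_nXY: "continuous_on UNIV (nXY x0 y0)"
  unfolding nXY_def[abs_def] by (intro continuous_intros)

lemma integrable_moment:
  fixes M :: "'c::metric_space measure"
  assumes "sets M = sets borel" "(\<integral>\<^sup>+ x. ennreal (nX c x ^ k) \<partial>M) < \<infinity>"
  shows "integrable M (\<lambda>x. nX c x ^ k)"
proof (rule integrableI_nonneg)
  show "(\<lambda>x. nX c x ^ k) \<in> borel_measurable M"
    using assms(1) continuous_on_nX[of c]
    by (auto simp: measurable_cong_sets[OF assms(1) refl] intro!: borel_measurable_continuous_onI continuous_intros)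
qed (use assms(2) in \<open>auto simp: nX_nonneg\<close>)


lemma CbkE:
  assumes "f \<in> Cbk w k" "\<And>z. 0 \<le> w z"
  obtains C where "0 \<le> C" "continuous_on UNIV f" "\<And>z. \<bar>f z\<bar> \<le> C * (1 + w z ^ k)"
proof -
  obtain C where C: "continuous_on UNIV f" "\<And>z. \<bar>f z\<bar> \<le> C * (1 + w z ^ k)"
    using assms(1) unfolding Cbk_def by blast
  have "0 \<le> C * (1 + w z ^ k)" "0 < 1 + w z ^ k" for z
    using C(2)[of z] assms(2)[of z] by (auto intro: order_trans add_pos_nonneg)
  then have "0 \<le> C" by (meson zero_le_mult_iff not_less)
  with C that show ?thesis by blast
qed

lemma bcont_Cbk:
  assumes "\<And>z. 0 \<le> w z" and "f \<in> bcont" shows "f \<in> Cbk w k"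
proof -
  obtain B where B: "continuous_on UNIV f" "\<And>z. \<bar>f z\<bar> \<le> B" using assms(2) bcontE by metis
  have "\<bar>f z\<bar> \<le> B * (1 + w z ^ k)" for z
    using B(2)[of z] assms(1)[of z] abs_ge_zero[of "f z"]
    by (smt (verit) mult_le_cancel_left1 zero_le_power)
  then show ?thesis using B(1) unfolding Cbk_def by blast
qed

lemma Cbk_lin:
  assumes "f \<in> Cbk w k" "g \<in> Cbk w k" and w: "\<And>z. 0 \<le> w z"
  shows "(\<lambda>z. a * f z + b * g z) \<in> Cbk w k"
proof -
  obtain C D where C: "continuous_on UNIV f" "\<And>z. \<bar>f z\<bar> \<le> C * (1 + w z ^ k)"
    and D: "continuous_on UNIV g" "\<And>z. \<bar>g z\<bar> \<le> D * (1 + w z ^ k)"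
    using assms(1,2) unfolding Cbk_def by blast
  have "\<bar>a * f z + b * g z\<bar> \<le> (\<bar>a\<bar> * C + \<bar>b\<bar> * D) * (1 + w z ^ k)" for z
  proof -
    have "\<bar>a * f z + b * g z\<bar> \<le> \<bar>a\<bar> * \<bar>f z\<bar> + \<bar>b\<bar> * \<bar>g z\<bar>"
      by (simp add: abs_mult abs_triangle_ineq[THEN order_trans])
    also have "\<dots> \<le> \<bar>a\<bar> * (C * (1 + w z ^ k)) + \<bar>b\<bar> * (D * (1 + w z ^ k))"
      using C(2)[of z] D(2)[of z] by (intro add_mono mult_left_mono) auto
    finally show ?thesis by (simp add: algebra_simps)
  qed
  moreover have "continuous_on UNIV (\<lambda>z. a * f z + b * g z)" using C(1) D(1) by (intro continuous_intros)
  ultimately show ?thesis unfolding Cbk_def by blast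
qed

lemma Cbk_scale: "f \<in> Cbk w k \<Longrightarrow> (\<And>z. 0 \<le> w z) \<Longrightarrow> (\<lambda>z. a * f z) \<in> Cbk w k"
  using Cbk_lin[of f w k f a 0] by simp

lemma power_in_Cbk:
  assumes "continuous_on UNIV w" "\<And>z. 0 \<le> w z" shows "(\<lambda>z. w z ^ k) \<in> Cbk w k"
  unfolding Cbk_def using assms by (auto intro!: continuous_intros exI[of _ 1])

lemma Cbk_excess:
  assumes f: "f \<in> Cbk w k" and w: "\<And>z. 0 \<le> w z"
  shows "(\<lambda>z. max 0 (f z - c)) \<in> Cbk w k"
proof -
  obtain C where C: "0 \<le> C" "continuous_on UNIV f" "\<And>z. \<bar>f z\<bar> \<le> C * (1 + w z ^ k)"
    using CbkE[OF f w] by metis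
  have "\<bar>max 0 (f z - c)\<bar> \<le> (C + \<bar>c\<bar>) * (1 + w z ^ k)" for z
  proof -
    have "1 \<le> 1 + w z ^ k" using w[of z] by simp
    then have "\<bar>c\<bar> \<le> \<bar>c\<bar> * (1 + w z ^ k)" by (simp add: mult_le_cancel_left1)
    moreover have "\<bar>max 0 (f z - c)\<bar> \<le> \<bar>f z\<bar> + \<bar>c\<bar>" by (auto simp: max_def abs_if)
    moreover have "(C + \<bar>c\<bar>) * (1 + w z ^ k) = C * (1 + w z ^ k) + \<bar>c\<bar> * (1 + w z ^ k)"
      by (rule distrib_right)
    ultimately show ?thesis using C(3)[of z] by linarith
  qed
  moreover have "continuous_on UNIV (\<lambda>z. max 0 (f z - c))" using C(2) by (intro continuous_intros)
  ultimately show ?thesis unfolding Cbk_def by blast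
qed

lemma Cbk_sum_fst_snd:
  fixes x0 :: "'a::metric_space" and y0 :: "'b::metric_space"
  assumes u: "u \<in> Cbk (nX x0) k" and v: "v \<in> Cbk (nX y0) k"
  shows "(\<lambda>z. u (fst z) + v (snd z)) \<in> Cbk (nXY x0 y0) k"
proof -
  obtain C where C: "0 \<le> C" "continuous_on UNIV u" "\<And>x. \<bar>u x\<bar> \<le> C * (1 + nX x0 x ^ k)"
    using CbkE[OF u nX_nonneg] by metis
  obtain D where D: "0 \<le> D" "continuous_on UNIV v" "\<And>y. \<bar>v y\<bar> \<le> D * (1 + nX y0 y ^ k)"
    using CbkE[OF v nX_nonneg] by metis
  have "\<bar>u (fst z) + v (snd z)\<bar> \<le> (C + D) * (1 + nXY x0 y0 z ^ k)" for z
  proof -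
    have "nX x0 (fst z) ^ k \<le> nXY x0 y0 z ^ k" "nX y0 (snd z) ^ k \<le> nXY x0 y0 z ^ k"
      by (intro power_mono; simp add: nX_def nXY_def)+
    then have "C * (1 + nX x0 (fst z) ^ k) + D * (1 + nX y0 (snd z) ^ k)
        \<le> C * (1 + nXY x0 y0 z ^ k) + D * (1 + nXY x0 y0 z ^ k)"
      using C(1) D(1) by (intro add_mono mult_left_mono) auto
    then show ?thesis
      using C(3)[of "fst z"] D(3)[of "snd z"] by (simp add: algebra_simps abs_le_iff)
  qed
  moreover have "continuous_on UNIV (\<lambda>z. u (fst z) + v (snd z))"
    using C(2) D(2) by (intro continuous_intros continuous_on_compose2[OF C(2)]
        continuous_on_compose2[OF D(2)]) auto
  ultimately show ?thesis unfolding Cbk_def by blast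
qed

lemma power_add_le_two_power:
  fixes a b :: real assumes "0 \<le> a" "0 \<le> b"
  shows "(a + b) ^ k \<le> 2 ^ k * (a ^ k + b ^ k)"
proof -
  have "(a + b) ^ k \<le> (2 * max a b) ^ k" using assms by (intro power_mono) auto
  also have "\<dots> = 2 ^ k * max a b ^ k" by (simp add: power_mult_distrib)
  also have "\<dots> \<le> 2 ^ k * (a ^ k + b ^ k)" using assms by (auto simp: max_def)
  finally show ?thesis .
qed

lemma nn_integral_le_of_truncations:
  assumes f: "f \<in> borel_measurable M" "\<And>x. 0 \<le> f x"
    and bound: "\<And>n. (\<integral>\<^sup>+ x. ennreal (min (real n) (f x)) \<partial>M) \<le> ennreal C"
  shows "(\<integral>\<^sup>+ x. ennreal (f x) \<partial>M) \<le> ennreal C"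
proof -
  have "(SUP n. ennreal (min (real n) t)) = ennreal t" if "0 \<le> t" for t
  proof (rule antisym)
    show "(SUP n. ennreal (min (real n) t)) \<le> ennreal t" by (rule SUP_least) (auto intro: ennreal_leI)
    obtain n :: nat where "t \<le> real n" using real_arch_simple by blast
    then have "ennreal t = ennreal (min (real n) t)" by simp
    then show "ennreal t \<le> (SUP n. ennreal (min (real n) t))" by (metis SUP_upper UNIV_I)
  qed
  then have "(\<integral>\<^sup>+ x. ennreal (f x) \<partial>M) = (\<integral>\<^sup>+ x. (SUP n. ennreal (min (real n) (f x))) \<partial>M)"
    using f(2) by simp
  also have "\<dots> = (SUP n. \<integral>\<^sup>+ x. ennreal (min (real n) (f x)) \<partial>M)"
    using f(1) by (intro nn_integral_monotone_convergence_SUP)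
      (auto simp: incseq_def le_fun_def intro!: ennreal_leI)
  also have "\<dots> \<le> ennreal C" by (rule SUP_least) (rule bound)
  finally show ?thesis .
qed

lemma tendsto_integral_excess:
  fixes c :: "'c \<Rightarrow> real"
  assumes "integrable M c"
  shows "(\<lambda>n. \<integral>x. max 0 (c x - real n) \<partial>M) \<longlonglongrightarrow> 0"
proof -
  have "(\<lambda>n. \<integral>x. max 0 (c x - real n) \<partial>M) \<longlonglongrightarrow> (\<integral>x. 0 \<partial>M)"
  proof (rule integral_dominated_convergence[where w="\<lambda>x. \<bar>c x\<bar>"])
    show "AE x in M. (\<lambda>n. max 0 (c x - real n)) \<longlonglongrightarrow> 0"
    proof (rule AE_I2)
      fix x
      obtain N :: nat where "c x \<le> real N" using real_arch_simple by blast
      then show "(\<lambda>n. max 0 (c x - real n)) \<longlonglongrightarrow> 0"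
        by (intro tendsto_eventually eventually_sequentiallyI[of N]) auto
    qed
  qed (use assms in auto)
  then show ?thesis by simp
qed

definition clip :: "nat \<Rightarrow> real \<Rightarrow> real" where
  "clip n t = max (- real n) (min (real n) t)"

lemma abs_diff_clip: "\<bar>t - clip n t\<bar> = max 0 (\<bar>t\<bar> - real n)"
  by (auto simp: clip_def max_def min_def abs_if)

lemma bcont_clip: "continuous_on UNIV f \<Longrightarrow> (\<lambda>z. clip n (f z)) \<in> bcont"
  by (rule bcontI[where B="real n"]) (auto simp: clip_def intro!: continuous_intros)

lemma tendsto_integral_clip:
  fixes f :: "'c \<Rightarrow> real"
  assumes "integrable M f"
  shows "(\<lambda>n. \<integral>x. clip n (f x) \<partial>M) \<longlonglongrightarrow> (\<integral>x. f x \<partial>M)"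
proof (rule integral_dominated_convergence[where w="\<lambda>x. \<bar>f x\<bar>"])
  show "AE x in M. (\<lambda>n. clip n (f x)) \<longlonglongrightarrow> f x"
  proof (rule AE_I2)
    fix x
    obtain N :: nat where "\<bar>f x\<bar> \<le> real N" using real_arch_simple by blast
    then show "(\<lambda>n. clip n (f x)) \<longlonglongrightarrow> f x"
      by (intro tendsto_eventually eventually_sequentiallyI[of N]) (auto simp: clip_def)
  qed
qed (use assms in \<open>auto simp: clip_def\<close>)

section \<open>Functionals with prescribed marginals\<close>

locale coupling_functional =
  fixes x0 :: "'a::metric_space" and y0 :: "'b::metric_space" and k :: nat
    and \<mu> :: "'a measure" and \<nu> :: "'b measure" and L :: "('a \<times> 'b \<Rightarrow> real) \<Rightarrow> real"
  assumes lc_X: "loc_compact_type TYPE('a)" and sc_X: "sigma_compact_type TYPE('a)"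
    and lc_Y: "loc_compact_type TYPE('b)" and sc_Y: "sigma_compact_type TYPE('b)"
    and sets_\<mu>: "sets \<mu> = sets borel" and finite_\<mu>: "finite_measure \<mu>"
    and \<nu>_Pk: "\<nu> \<in> Pk (nX y0) k"
    and lin: "\<And>f g a b. f \<in> Cbk (nXY x0 y0) k \<Longrightarrow> g \<in> Cbk (nXY x0 y0) k \<Longrightarrow>
               L (\<lambda>z. a * f z + b * g z) = a * L f + b * L g"
    and nonneg: "\<And>p. p \<in> Cbk (nXY x0 y0) k \<Longrightarrow> (\<forall>z. p z \<ge> 0) \<Longrightarrow> L p \<ge> 0"
    and marg: "\<And>u v. u \<in> Cbk (nX x0) k \<Longrightarrow> v \<in> Cbk (nX y0) k \<Longrightarrow>
               L (\<lambda>(x, y). u x + v y) = (\<integral>x. u x \<partial>\<mu>) + (\<integral>y. v y \<partial>\<nu>)"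
begin

abbreviation "CX \<equiv> Cbk (nX x0) k"
abbreviation "CY \<equiv> Cbk (nX y0) k"
abbreviation "CXY \<equiv> Cbk (nXY x0 y0) k"

lemma sets_\<nu>: "sets \<nu> = sets borel" and prob_space_\<nu>: "prob_space \<nu>"
  and moment_\<nu>: "(\<integral>\<^sup>+ y. ennreal (nX y0 y ^ k) \<partial>\<nu>) < \<infinity>"
  using \<nu>_Pk by (auto simp: Pk_def)

lemma space_\<mu>: "space \<mu> = UNIV" and space_\<nu>: "space \<nu> = UNIV"
  using sets_eq_imp_space_eq[OF sets_\<mu>] sets_eq_imp_space_eq[OF sets_\<nu>] by auto

lemma L_diff: "f \<in> CXY \<Longrightarrow> g \<in> CXY \<Longrightarrow> L (\<lambda>z. f z - g z) = L f - L g"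
  using lin[of f g 1 "-1"] by simp

lemma L_mono:
  assumes "f \<in> CXY" "g \<in> CXY" "\<And>z. f z \<le> g z" shows "L f \<le> L g"
  using nonneg[of "\<lambda>z. g z - f z"] Cbk_lin[OF assms(2,1) nXY_nonneg, of 1 "-1"] assms
  by (simp add: L_diff)

lemma L_sum_fst_snd:
  "u \<in> CX \<Longrightarrow> v \<in> CY \<Longrightarrow> L (\<lambda>z. u (fst z) + v (snd z)) = (\<integral>x. u x \<partial>\<mu>) + (\<integral>y. v y \<partial>\<nu>)"
  using marg by (simp add: case_prod_unfold)

lemma zero_in_CX: "(\<lambda>x. 0) \<in> CX" and zero_in_CY: "(\<lambda>y. 0) \<in> CY"
  by (auto intro: bcont_Cbk nX_nonneg)

lemma Cbk_fst: "u \<in> CX \<Longrightarrow> (\<lambda>z. u (fst z)) \<in> CXY"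
  using Cbk_sum_fst_snd[OF _ zero_in_CY] by simp

lemma L_fst: "u \<in> CX \<Longrightarrow> L (\<lambda>z. u (fst z)) = (\<integral>x. u x \<partial>\<mu>)"
  using L_sum_fst_snd[OF _ zero_in_CY] by simp

lemma L_snd: "v \<in> CY \<Longrightarrow> L (\<lambda>z. v (snd z)) = (\<integral>y. v y \<partial>\<nu>)"
  using L_sum_fst_snd[OF zero_in_CX] by simp

lemma L_one: "L (\<lambda>z. 1) = 1"
  using L_snd[of "\<lambda>y. 1"] prob_space.prob_space[OF prob_space_\<nu>]
  by (simp add: space_\<nu> bcont_Cbk nX_nonneg)

lemma prob_space_\<mu>: "prob_space \<mu>"
proof (rule prob_spaceI)
  have "measure \<mu> UNIV = 1" using L_fst[of "\<lambda>x. 1"] L_one by (simp add: space_\<mu> bcont_Cbk nX_nonneg)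
  then show "emeasure \<mu> (space \<mu>) = 1"
    by (simp add: space_\<mu> finite_measure.emeasure_eq_measure[OF finite_\<mu>])
qed

lemma moment_\<mu>: "(\<integral>\<^sup>+ x. ennreal (nX x0 x ^ k) \<partial>\<mu>) < \<infinity>"
proof -
  have trunc: "(\<lambda>x. min (real n) (nX x0 x ^ k)) \<in> bcont" for n
    using nX_nonneg[of x0] by (intro bcontI[where B="real n"] continuous_intros continuous_on_nX) auto
  have "(\<integral>\<^sup>+ x. ennreal (nX x0 x ^ k) \<partial>\<mu>) \<le> ennreal (L (\<lambda>z. nX x0 (fst z) ^ k))"
  proof (rule nn_integral_le_of_truncations)
    show "(\<lambda>x. nX x0 x ^ k) \<in> borel_measurable \<mu>"
      by (auto simp: measurable_cong_sets[OF sets_\<mu> refl] intro!: borel_measurable_continuous_onI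
          continuous_intros continuous_on_nX)
    fix n
    have "(\<integral>\<^sup>+ x. ennreal (min (real n) (nX x0 x ^ k)) \<partial>\<mu>) = ennreal (L (\<lambda>z. min (real n) (nX x0 (fst z) ^ k)))"
      using L_fst[OF bcont_Cbk[OF nX_nonneg trunc]] nX_nonneg
      by (subst nn_integral_eq_integral[OF bcont_integrable[OF trunc finite_\<mu> sets_\<mu>]])
        (auto intro!: AE_I2 simp: nX_nonneg)
    also have "\<dots> \<le> ennreal (L (\<lambda>z. nX x0 (fst z) ^ k))"
      by (intro ennreal_leI L_mono Cbk_fst bcont_Cbk[OF nX_nonneg trunc] power_in_Cbk
          continuous_on_nX nX_nonneg) auto
    finally show "(\<integral>\<^sup>+ x. ennreal (min (real n) (nX x0 x ^ k)) \<partial>\<mu>) \<le> \<dots>" .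
  qed (simp add: nX_nonneg)
  then show ?thesis using le_less_trans by fastforce
qed


lemma L_le_tail_cutoffs:
  assumes f: "f \<in> bcont" "\<And>z. f z \<le> B" "\<And>z. z \<in> KX \<times> KY \<Longrightarrow> f z \<le> c"
    and B: "0 \<le> B" and c: "0 \<le> c"
    and qX: "qX \<in> bcont" "\<And>x. 0 \<le> qX x" "\<And>x. x \<notin> KX \<Longrightarrow> qX x = 1"
    and qY: "qY \<in> bcont" "\<And>y. 0 \<le> qY y" "\<And>y. y \<notin> KY \<Longrightarrow> qY y = 1"
  shows "L f \<le> c + B * (\<integral>x. qX x \<partial>\<mu>) + B * (\<integral>y. qY y \<partial>\<nu>)"
proof -
  define u where "u x = c + B * qX x" for x
  define v where "v y = B * qY y" for y
  have uv: "u \<in> CX" "v \<in> CY"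
    unfolding u_def[abs_def] v_def[abs_def]
    by (intro bcont_Cbk nX_nonneg bcont_add bcont_scale qX(1) qY(1) bcont_const)+
  have "f z \<le> u (fst z) + v (snd z)" for z
  proof -
    have "0 \<le> B * qX (fst z)" "0 \<le> B * qY (snd z)" using B qX(2) qY(2) by simp_all
    moreover have "z \<in> KX \<times> KY \<or> qX (fst z) = 1 \<or> qY (snd z) = 1"
      using qX(3) qY(3) by (cases z) auto
    ultimately show ?thesis using f(2,3)[of z] c by (auto simp: u_def v_def)
  qed
  then have "L f \<le> (\<integral>x. u x \<partial>\<mu>) + (\<integral>y. v y \<partial>\<nu>)"
    using L_mono[OF bcont_Cbk[OF nXY_nonneg f(1)] Cbk_sum_fst_snd[OF uv]] L_sum_fst_snd[OF uv]
    by simp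
  also have "(\<integral>x. u x \<partial>\<mu>) = (\<integral>x. c \<partial>\<mu>) + (\<integral>x. B * qX x \<partial>\<mu>)"
    unfolding u_def using bcont_integrable[OF qX(1) finite_\<mu> sets_\<mu>]
    by (intro Bochner_Integration.integral_add finite_measure.integrable_const[OF finite_\<mu>]) auto
  finally show ?thesis using prob_space.prob_space[OF prob_space_\<mu>] by (simp add: v_def space_\<mu>)
qed

lemma L_daniell:
  assumes f: "\<And>n. f n \<in> bcont" "\<And>n z. 0 \<le> f n z" "\<And>n z. f (Suc n) z \<le> f n z"
    and lim: "\<And>z. (\<lambda>n. f n z) \<longlonglongrightarrow> 0"
  shows "(\<lambda>n. L (f n)) \<longlonglongrightarrow> 0"
proof (rule LIMSEQ_I)
  fix e :: real assume e: "0 < e"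
  obtain B where B: "\<And>z. \<bar>f 0 z\<bar> \<le> B" using f(1)[of 0] bcontE by metis
  have B0: "0 \<le> B" using B[of undefined] by linarith
  have f_le_B: "f n z \<le> B" for n z
    using decseqD[of "\<lambda>n. f n z" 0 n] f(3) B[of z] by (simp add: decseq_Suc_iff)
  define \<eta> where "\<eta> = e / (3 * (B + 1))"
  have \<eta>: "0 < \<eta>" "B * \<eta> < e / 3" using e B0 by (auto simp: \<eta>_def field_simps)
  obtain qX KX where qX: "compact KX" "qX \<in> bcont" "\<And>x. 0 \<le> qX x" "\<And>x. x \<notin> KX \<Longrightarrow> qX x = 1"
    "(\<integral>x. qX x \<partial>\<mu>) < \<eta>"
    by (rule tail_cutoff_small_integral[OF lc_X sc_X finite_\<mu> sets_\<mu> \<eta>(1)]) (rule that)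
  obtain qY KY where qY: "compact KY" "qY \<in> bcont" "\<And>y. 0 \<le> qY y" "\<And>y. y \<notin> KY \<Longrightarrow> qY y = 1"
    "(\<integral>y. qY y \<partial>\<nu>) < \<eta>"
    by (rule tail_cutoff_small_integral[OF lc_Y sc_Y prob_space.finite_measure[OF prob_space_\<nu>]
        sets_\<nu> \<eta>(1)]) (rule that)
  have cont: "continuous_on UNIV (f n)" for n using f(1) bcontE by metis
  have e3: "0 < e / 3" using e by simp
  obtain N where N: "\<And>n z. N \<le> n \<Longrightarrow> z \<in> KX \<times> KY \<Longrightarrow> f n z < e / 3"
    by (rule dini_eventually_less[OF compact_Times[OF qX(1) qY(1)] cont f(3) lim e3]) (rule that)
  have "L (f n) < e" if "N \<le> n" for n
  proof -
    have "L (f n) \<le> e / 3 + B * (\<integral>x. qX x \<partial>\<mu>) + B * (\<integral>y. qY y \<partial>\<nu>)"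
      by (rule L_le_tail_cutoffs[OF f(1) f_le_B _ B0 _ qX(2-4) qY(2-4)])
        (use N[OF that] e3 in \<open>auto intro: less_imp_le\<close>)
    also have "\<dots> < e"
      using \<eta>(2) mult_left_mono[OF less_imp_le[OF qX(5)] B0] mult_left_mono[OF less_imp_le[OF qY(5)] B0]
      by linarith
    finally show ?thesis .
  qed
  moreover have "0 \<le> L (f n)" for n using nonneg[OF bcont_Cbk[OF nXY_nonneg f(1)]] f(2) by blast
  ultimately show "\<exists>N. \<forall>n\<ge>N. norm (L (f n) - 0) < e" by auto
qed

sublocale daniell: daniell_functional L
proof
  show "L (\<lambda>z. a * f z + b * g z) = a * L f + b * L g" if "f \<in> bcont" "g \<in> bcont" for f g a b
    using lin that by (simp add: bcont_Cbk nXY_nonneg)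
  show "0 \<le> L f" if "f \<in> bcont" "\<forall>z. 0 \<le> f z" for f
    using nonneg that by (simp add: bcont_Cbk nXY_nonneg)
  show "(\<lambda>n. L (f n)) \<longlonglongrightarrow> 0"
    if "\<forall>n. f n \<in> bcont" "\<forall>n z. 0 \<le> f n z" "\<forall>n z. f (Suc n) z \<le> f n z" "\<forall>z. (\<lambda>n. f n z) \<longlonglongrightarrow> 0"
    for f
    using that by (intro L_daniell) auto
qed (rule L_one)

abbreviation \<pi> :: "('a \<times> 'b) measure" where "\<pi> \<equiv> daniell.repr_measure"

lemma distr_\<pi>_fst: "distr \<pi> borel fst = \<mu>"
proof (rule measure_eqI_bcont)
  have fst: "fst \<in> measurable \<pi> borel"
    by (simp add: measurable_cong_sets[OF daniell.sets_repr_measure refl] borel_measurable_continuous_onI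
        continuous_on_fst continuous_on_id)
  show "finite_measure (distr \<pi> borel fst)"
    by (rule prob_space.finite_measure[OF prob_space.prob_space_distr[OF daniell.prob_space_repr_measure fst]])
  fix g :: "'a \<Rightarrow> real" assume g: "g \<in> bcont"
  have "(\<integral>x. g x \<partial>distr \<pi> borel fst) = (\<integral>z. g (fst z) \<partial>\<pi>)"
    by (rule integral_distr[OF fst bcont_measurable[OF g]])
  also have "\<dots> = (\<integral>x. g x \<partial>\<mu>)"
    using daniell.I_eq_integral[OF bcont_compose[OF g continuous_on_fst[OF continuous_on_id]]]
      L_fst[OF bcont_Cbk[OF nX_nonneg g]] by simp
  finally show "(\<integral>x. g x \<partial>distr \<pi> borel fst) = (\<integral>x. g x \<partial>\<mu>)" .
qed (simp_all add: finite_\<mu> sets_\<mu>)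

lemma distr_\<pi>_snd: "distr \<pi> borel snd = \<nu>"
proof (rule measure_eqI_bcont)
  have snd: "snd \<in> measurable \<pi> borel"
    by (simp add: measurable_cong_sets[OF daniell.sets_repr_measure refl] borel_measurable_continuous_onI
        continuous_on_snd continuous_on_id)
  show "finite_measure (distr \<pi> borel snd)"
    by (rule prob_space.finite_measure[OF prob_space.prob_space_distr[OF daniell.prob_space_repr_measure snd]])
  fix g :: "'b \<Rightarrow> real" assume g: "g \<in> bcont"
  have "(\<integral>y. g y \<partial>distr \<pi> borel snd) = (\<integral>z. g (snd z) \<partial>\<pi>)"
    by (rule integral_distr[OF snd bcont_measurable[OF g]])
  also have "\<dots> = (\<integral>y. g y \<partial>\<nu>)"
    using daniell.I_eq_integral[OF bcont_compose[OF g continuous_on_snd[OF continuous_on_id]]]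
      L_snd[OF bcont_Cbk[OF nX_nonneg g]] by simp
  finally show "(\<integral>y. g y \<partial>distr \<pi> borel snd) = (\<integral>y. g y \<partial>\<nu>)" .
qed (simp_all add: prob_space.finite_measure[OF prob_space_\<nu>] sets_\<nu>)


lemma integrable_weight: "integrable \<pi> (\<lambda>z. 1 + nXY x0 y0 z ^ k)"
proof (rule integrableI_nonneg)
  define W where "W z = 1 + nXY x0 y0 z ^ k" for z
  have W: "continuous_on UNIV W" "\<And>z. 1 \<le> W z"
    unfolding W_def[abs_def] using nXY_nonneg[of x0 y0] by (auto intro!: continuous_intros continuous_on_nXY)
  have W_C: "W \<in> CXY"
    unfolding W_def[abs_def] using bcont_Cbk[OF nXY_nonneg bcont_const]
    by (intro Cbk_lin[where a=1 and b=1, simplified] power_in_Cbk continuous_on_nXY nXY_nonneg)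
  have trunc: "(\<lambda>z. min (real n) (W z)) \<in> bcont" for n
  proof (rule bcontI[where B="real n"])
    show "continuous_on UNIV (\<lambda>z. min (real n) (W z))" using W(1) by (intro continuous_intros)
    show "\<bar>min (real n) (W z)\<bar> \<le> real n" for z using W(2)[of z] by (auto simp: min_def)
  qed
  show W_meas: "W \<in> borel_measurable \<pi>"
    using W(1) by (simp add: measurable_cong_sets[OF daniell.sets_repr_measure refl]
        borel_measurable_continuous_onI)
  have "(\<integral>\<^sup>+ z. ennreal (W z) \<partial>\<pi>) \<le> ennreal (L W)"
  proof (rule nn_integral_le_of_truncations)
    fix n
    have "(\<integral>\<^sup>+ z. ennreal (min (real n) (W z)) \<partial>\<pi>) = ennreal (L (\<lambda>z. min (real n) (W z)))"
      using W(2) daniell.I_eq_integral[OF trunc]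
      by (subst nn_integral_eq_integral[OF daniell.integrable_repr_measure[OF trunc]])
        (auto intro!: AE_I2 intro: order_trans[OF zero_le_one])
    also have "\<dots> \<le> ennreal (L W)"
      by (intro ennreal_leI L_mono bcont_Cbk[OF nXY_nonneg trunc] W_C) simp
    finally show "(\<integral>\<^sup>+ z. ennreal (min (real n) (W z)) \<partial>\<pi>) \<le> ennreal (L W)" .
  qed (use W W_meas in \<open>auto intro: order_trans[OF zero_le_one]\<close>)
  then show "(\<integral>\<^sup>+ z. ennreal (W z) \<partial>\<pi>) < \<infinity>" using le_less_trans by fastforce
qed (auto intro!: AE_I2 add_nonneg_nonneg simp: nXY_nonneg)

lemma Cbk_dominated_by_marginals:
  assumes f: "f \<in> CXY"
  obtains A B where "A \<in> CX" "B \<in> CY" "integrable \<mu> A" "integrable \<nu> B"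
    "\<And>x. 0 \<le> A x" "\<And>y. 0 \<le> B y" "\<And>z. \<bar>f z\<bar> \<le> A (fst z) + B (snd z)"
proof -
  obtain C where C: "0 \<le> C" "\<And>z. \<bar>f z\<bar> \<le> C * (1 + nXY x0 y0 z ^ k)"
    using CbkE[OF f nXY_nonneg] by metis
  define A where "A x = C * 1 + (C * 2 ^ k) * nX x0 x ^ k" for x
  define B where "B y = (C * 2 ^ k) * nX y0 y ^ k + 0 * 0" for y
  show ?thesis
  proof (rule that)
    show "A \<in> CX" "B \<in> CY"
      unfolding A_def[abs_def] B_def[abs_def]
      by (intro Cbk_lin bcont_Cbk[OF nX_nonneg bcont_const] power_in_Cbk continuous_on_nX nX_nonneg)+
    show "integrable \<mu> A" "integrable \<nu> B"
      unfolding A_def B_def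
      using integrable_moment[OF sets_\<mu> moment_\<mu>] integrable_moment[OF sets_\<nu> moment_\<nu>]
        finite_measure.integrable_const[OF finite_\<mu>]
      by (auto intro!: Bochner_Integration.integrable_add integrable_mult_right)
    show "0 \<le> A x" "0 \<le> B y" for x y
      using C(1) nX_nonneg[of x0 x] nX_nonneg[of y0 y] by (simp_all add: A_def B_def)
    show "\<bar>f z\<bar> \<le> A (fst z) + B (snd z)" for z
    proof -
      have "nXY x0 y0 z ^ k \<le> 2 ^ k * (nX x0 (fst z) ^ k + nX y0 (snd z) ^ k)"
        unfolding nXY_def nX_def by (rule power_add_le_two_power) auto
      then have "C * (1 + nXY x0 y0 z ^ k) \<le> C * (1 + 2 ^ k * (nX x0 (fst z) ^ k + nX y0 (snd z) ^ k))"
        using C(1) by (intro mult_left_mono) auto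
      then show ?thesis using C(2)[of z] by (simp add: A_def B_def algebra_simps)
    qed
  qed
qed

lemma L_clip_tendsto:
  assumes f: "f \<in> CXY"
  shows "(\<lambda>n. L (\<lambda>z. clip n (f z))) \<longlonglongrightarrow> L f"
proof -
  obtain A B where AB: "A \<in> CX" "B \<in> CY" "integrable \<mu> A" "integrable \<nu> B"
    "\<And>x. 0 \<le> A x" "\<And>y. 0 \<le> B y" "\<And>z. \<bar>f z\<bar> \<le> A (fst z) + B (snd z)"
    by (rule Cbk_dominated_by_marginals[OF f]) (rule that)
  have f_cont: "continuous_on UNIV f" using f by (simp add: Cbk_def)
  define h where "h n z = max 0 (2 * A (fst z) - real n) + max 0 (2 * B (snd z) - real n)" for n z
  have excess: "(\<lambda>x. max 0 (2 * A x - real n)) \<in> CX" "(\<lambda>y. max 0 (2 * B y - real n)) \<in> CY" for n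
    by (intro Cbk_excess Cbk_scale AB(1,2) nX_nonneg)+
  have h_C: "h n \<in> CXY" for n
    unfolding h_def[abs_def] by (intro Cbk_sum_fst_snd excess)
  have "(\<lambda>n. L (h n)) \<longlonglongrightarrow> 0 + 0"
    unfolding h_def L_sum_fst_snd[OF excess]
    using AB(3,4) by (intro tendsto_add tendsto_integral_excess integrable_mult_right)
  then have "(\<lambda>n. L (h n)) \<longlonglongrightarrow> 0" by simp
  then have "(\<lambda>n. L (\<lambda>z. clip n (f z)) - L f) \<longlonglongrightarrow> 0"
  proof (rule Lim_null_comparison[rotated], intro always_eventually allI)
    fix n
    have clip_C: "(\<lambda>z. clip n (f z)) \<in> CXY" by (rule bcont_Cbk[OF nXY_nonneg bcont_clip[OF f_cont]])
    have "\<bar>f z - clip n (f z)\<bar> \<le> h n z" for z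
      using AB(5)[of "fst z"] AB(6)[of "snd z"] AB(7)[of z] by (auto simp: abs_diff_clip h_def max_def)
    then have "L (\<lambda>z. clip n (f z) - f z) \<le> L (h n)" "L (\<lambda>z. f z - clip n (f z)) \<le> L (h n)"
      by (intro L_mono h_C Cbk_lin[where a=1 and b="-1", simplified] f clip_C nXY_nonneg;
          force simp: abs_le_iff)+
    then show "norm (L (\<lambda>z. clip n (f z)) - L f) \<le> L (h n)"
      using L_diff[OF clip_C f] L_diff[OF f clip_C] by auto
  qed
  then show ?thesis by (simp add: LIM_zero_iff)
qed

lemma L_eq_integral:
  assumes f: "f \<in> CXY" shows "integrable \<pi> f" "L f = (\<integral>z. f z \<partial>\<pi>)"
proof -
  obtain C where C: "0 \<le> C" "continuous_on UNIV f" "\<And>z. \<bar>f z\<bar> \<le> C * (1 + nXY x0 y0 z ^ k)"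
    using CbkE[OF f nXY_nonneg] by metis
  show int: "integrable \<pi> f"
  proof (rule Bochner_Integration.integrable_bound[OF integrable_mult_right[OF integrable_weight, of C]])
    show "f \<in> borel_measurable \<pi>"
      using C(2) by (simp add: measurable_cong_sets[OF daniell.sets_repr_measure refl]
          borel_measurable_continuous_onI)
    have "norm (f z) \<le> norm (C * (1 + nXY x0 y0 z ^ k))" for z
      using C(1) C(3)[of z] nXY_nonneg[of x0 y0 z] by (simp add: abs_mult)
    then show "AE z in \<pi>. norm (f z) \<le> norm (C * (1 + nXY x0 y0 z ^ k))" by simp
  qed
  have "(\<lambda>n. L (\<lambda>z. clip n (f z))) = (\<lambda>n. \<integral>z. clip n (f z) \<partial>\<pi>)"
    using daniell.I_eq_integral[OF bcont_clip[OF C(2)]] by simp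
  then show "L f = (\<integral>z. f z \<partial>\<pi>)"
    using LIMSEQ_unique[OF L_clip_tendsto[OF f]] tendsto_integral_clip[OF int] by simp
qed

lemma moment_\<pi>: "(\<integral>\<^sup>+ z. ennreal (nXY x0 y0 z ^ k) \<partial>\<pi>) < \<infinity>"
  using L_eq_integral(1)[OF power_in_Cbk[OF continuous_on_nXY nXY_nonneg]]
  by (simp add: integrable_iff_bounded nXY_nonneg)

theorem coupling_representation:
  "\<mu> \<in> Pk (nX x0) k \<and>
   (\<exists>\<pi>. \<pi> \<in> Pk (nXY x0 y0) k \<and> distr \<pi> borel fst = \<mu> \<and> distr \<pi> borel snd = \<nu> \<and>
        (\<forall>f \<in> CXY. integrable \<pi> f \<and> L f = (\<integral>z. f z \<partial>\<pi>)))"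
  using sets_\<mu> prob_space_\<mu> moment_\<mu> daniell.sets_repr_measure daniell.prob_space_repr_measure moment_\<pi>
    distr_\<pi>_fst distr_\<pi>_snd L_eq_integral
  by (auto simp: Pk_def)

end

theorem mainTheorem1:
  fixes x0 :: "'a::polish_space" and y0 :: "'b::polish_space"
    and k :: nat and \<mu> :: "'a measure" and \<nu> :: "'b measure"
    and L :: "('a \<times> 'b \<Rightarrow> real) \<Rightarrow> real"
  assumes "loc_compact_type TYPE('a)" "sigma_compact_type TYPE('a)"
    and "loc_compact_type TYPE('b)" "sigma_compact_type TYPE('b)"
    and "sets \<mu> = sets borel" "finite_measure \<mu>"
    and "\<nu> \<in> Pk (nX y0) k"
    and lin: "\<And>f g a b. f \<in> Cbk (nXY x0 y0) k \<Longrightarrow> g \<in> Cbk (nXY x0 y0) k \<Longrightarrow>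
               L (\<lambda>z. a * f z + b * g z) = a * L f + b * L g"
    and cont: "\<And>f e. f \<in> Cbk (nXY x0 y0) k \<Longrightarrow> e > 0 \<Longrightarrow>
               \<exists>d>0. \<forall>g \<in> Cbk (nXY x0 y0) k.
                 norm_bk (nXY x0 y0) k (\<lambda>z. g z - f z) < d \<longrightarrow> \<bar>L g - L f\<bar> < e"
    and nonneg: "\<And>p. p \<in> Cbk (nXY x0 y0) k \<Longrightarrow> (\<forall>z. p z \<ge> 0) \<Longrightarrow> L p \<ge> 0"
    and marg: "\<And>u v. u \<in> Cbk (nX x0) k \<Longrightarrow> v \<in> Cbk (nX y0) k \<Longrightarrow>
               L (\<lambda>(x, y). u x + v y) = (\<integral>x. u x \<partial>\<mu>) + (\<integral>y. v y \<partial>\<nu>)"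
  shows "\<mu> \<in> Pk (nX x0) k \<and>
         (\<exists>\<pi>. \<pi> \<in> Pk (nXY x0 y0) k \<and>
              distr \<pi> borel fst = \<mu> \<and> distr \<pi> borel snd = \<nu> \<and>
              (\<forall>f \<in> Cbk (nXY x0 y0) k. integrable \<pi> f \<and> L f = (\<integral>z. f z \<partial>\<pi>)))"
proof -
  interpret coupling_functional x0 y0 k \<mu> \<nu> L
    by (intro coupling_functional.intro) (fact assms lin nonneg marg)+
  show ?thesis by (rule coupling_representation)
qed

end
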